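(* Let $n$ be a positive integer and let $p>n+1$ be a prime. (i) If $n$ is odd, then $$\sum_{\substack{0<i_1<\cdots<i_n<p\\ i_1\equiv 1,2\ (\mathrm{mod}\ 6)}}\frac{1}{i_1\cdots i_n}\equiv \sum_{\substack{0<i_1<\cdots<i_n<p\\ i_1\equiv 4,5\ (\mathrm{mod}\ 6)}}\frac{1}{i_1\cdots i_n}\pmod p.$$ (ii) If $n$ is even, then $$\sum_{\substack{0<i_1<\cdots<i_n<p\\ i_1\equiv 0\ (\mathrm{mod}\ 3)}}\frac{(-1)^{i_1}}{i_1\cdots i_n}\equiv 2\sum_{\substack{0<i_1<\cdots<i_n<p\\ i_1\equiv 2,3,4\ (\mathrm{mod}\ 6)}}\frac{1}{i_1\cdots i_n}\pmod p.$$
   Context: All sums range over integers $i_1,\dots,i_n$. The summands are rational numbers whose denominators are not divisible by $p$; for such rationals $a,b$, $a\equiv b \pmod p$ means that $a-b$ lies in $p\mathbb{Z}_{(p)}$ (equivalently, $a-b$ is divisible by $p$ in the ring $\mathbb{Z}_p$ of $p$-adic integers). *)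

theory Defs
  imports Complex_Main "HOL-Computational_Algebra.Primes"
begin

text \<open>Strictly increasing n-tuples 0 < i_1 < ... < i_n < p, represented as lists
  [i_1, ..., i_n]; the first entry i_1 is hd.\<close>
definition incr_tuples :: "nat \<Rightarrow> nat \<Rightarrow> nat list set" where
  "incr_tuples n p = {xs. length xs = n \<and> sorted_wrt (<) xs \<and> (\<forall>i\<in>set xs. 0 < i \<and> i < p)}"

text \<open>Congruence of rationals modulo p: a - b lies in p Z_(p), i.e. p divides the
  numerator of a - b in lowest terms.\<close>
definition rat_cong :: "rat \<Rightarrow> rat \<Rightarrow> int \<Rightarrow> bool" where
  "rat_cong a b p \<longleftrightarrow> p dvd fst (quotient_of (a - b))"

end

theory Submission
  imports Defs "HOL-Number_Theory.Number_Theory"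
begin

text \<open>Both congruences say \<open>\<Sum> w(i\<^sub>1) / (i\<^sub>1 \<cdots> i\<^sub>n) \<equiv> 0 (mod p)\<close> for a weight \<open>w\<close> of period 6
  (\<open>w_odd\<close>, \<open>w_even\<close> below). Splitting off \<open>i\<^sub>1 = x\<close> leaves \<open>\<Sum>\<^sub>x w(x)/x \<cdot> mhs p (n - 1) (x + 1)\<close>,
  where \<open>mhs p k a\<close> is the multiple harmonic sum over \<open>a \<le> i\<^sub>1 < \<dots> < i\<^sub>k < p\<close>. Modulo \<open>p\<close>,
  \<open>mhs p k a \<equiv> (-1)^(k+1) \<Sum>\<^sub>s (-1)^s C(a-1, s) / s^k\<close>: both sides satisfy the same recursion in
  \<open>a\<close>, and the right-hand side vanishes at \<open>a = p\<close> by Fermat's theorem and the vanishing of power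
  sums. Interchanging summations turns the sum into \<open>(-1)^n \<Sum>\<^sub>s (-1)^s V(s - 1) / s^n\<close> with the
  binomial transform \<open>V(j) = \<Sum>\<^sub>a w(a) C(a-1, j)\<close>. Since \<open>w(a+2) = w(a+1) - w(a) - c\<close>, summation by
  parts gives \<open>V(m) + V(m-1) + V(m-2)\<close> as a combination of binomial coefficients of \<open>p - 1\<close> and
  \<open>p\<close>; reducing these modulo \<open>p\<close> yields \<open>V(p - 2 - j) \<equiv> (-1)^n V(j)\<close>. Then the substitution
  \<open>s \<mapsto> p - s\<close> shows that the sum is congruent to its own negative.\<close>

section \<open>Multiple harmonic sums and binomial sums\<close>

definition incr_tuples_from :: "nat \<Rightarrow> nat \<Rightarrow> nat \<Rightarrow> nat list set" where
  "incr_tuples_from p k a = {xs. length xs = k \<and> sorted_wrt (<) xs \<and> (\<forall>i\<in>set xs. a \<le> i \<and> i < p)}"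

lemma incr_tuples_from_0 [simp]: "incr_tuples_from p 0 a = {[]}"
  by (auto simp: incr_tuples_from_def)

lemma incr_tuples_from_Suc:
  "incr_tuples_from p (Suc k) a = (\<Union>x\<in>{a..<p}. (#) x ` incr_tuples_from p k (Suc x))"
  unfolding incr_tuples_from_def
  by (auto simp: length_Suc_conv Suc_le_eq) (meson le_less_trans less_imp_le)

lemma finite_incr_tuples_from [simp]: "finite (incr_tuples_from p k a)"
  by (induction k arbitrary: a) (simp_all add: incr_tuples_from_Suc)

lemma incr_tuples_eq_from_1: "incr_tuples n p = incr_tuples_from p n 1"
  unfolding incr_tuples_def incr_tuples_from_def by auto

lemma finite_incr_tuples: "finite (incr_tuples n p)"
  by (simp add: incr_tuples_eq_from_1)

lemma sum_incr_tuples_from_Suc: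
  "(\<Sum>xs\<in>incr_tuples_from p (Suc k) a. f xs) =
   (\<Sum>x\<in>{a..<p}. \<Sum>ys\<in>incr_tuples_from p k (Suc x). f (x # ys))"
proof -
  have "(\<Sum>xs\<in>incr_tuples_from p (Suc k) a. f xs) =
        (\<Sum>x\<in>{a..<p}. \<Sum>xs\<in>(#) x ` incr_tuples_from p k (Suc x). f xs)"
    unfolding incr_tuples_from_Suc by (rule sum.UNION_disjoint) auto
  also have "\<dots> = (\<Sum>x\<in>{a..<p}. \<Sum>ys\<in>incr_tuples_from p k (Suc x). f (x # ys))"
    by (rule sum.cong[OF refl], subst sum.reindex) (auto simp: inj_on_def)
  finally show ?thesis .
qed

definition mhs :: "nat \<Rightarrow> nat \<Rightarrow> nat \<Rightarrow> rat" where
  "mhs p k a = (\<Sum>xs\<in>incr_tuples_from p k a. 1 / (\<Prod>i\<leftarrow>xs. of_nat i))"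

lemma mhs_0 [simp]: "mhs p 0 a = 1"
  by (simp add: mhs_def)

lemma mhs_Suc: "mhs p (Suc k) a = (\<Sum>x\<in>{a..<p}. 1 / of_nat x * mhs p k (Suc x))"
  unfolding mhs_def by (subst sum_incr_tuples_from_Suc) (simp add: sum_distrib_left)

lemma mhs_Suc_top [simp]: "mhs p (Suc k) p = 0"
  by (simp add: mhs_Suc)

lemma mhs_Suc_step:
  assumes "a < p"
  shows "mhs p (Suc k) a = 1 / of_nat a * mhs p k (Suc a) + mhs p (Suc k) (Suc a)"
proof -
  have "{a..<p} = insert a {Suc a..<p}" using assms by auto
  then show ?thesis by (simp add: mhs_Suc)
qed

lemma sum_incr_tuples_by_head:
  "(\<Sum>xs\<in>incr_tuples (Suc k) p. c (hd xs) / (\<Prod>i\<leftarrow>xs. of_nat i)) =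
   (\<Sum>x\<in>{1..<p}. c x * (1 / of_nat x * mhs p k (Suc x)))"
  unfolding incr_tuples_eq_from_1 sum_incr_tuples_from_Suc mhs_def
  by (simp add: sum_distrib_left)

lemma binomial_absorption_div:
  assumes "0 < s" "0 < x"
  shows "of_nat (x choose s) / of_nat x = (of_nat (x - 1 choose (s - 1)) / of_nat s :: 'a :: field_char_0)"
proof -
  have "of_nat s * of_nat (x choose s) = (of_nat x * of_nat (x - 1 choose (s - 1)) :: 'a)"
    using times_binomial_minus1_eq[OF assms(1), of x] by (metis of_nat_mult)
  then show ?thesis using assms by (simp add: field_simps)
qed

definition binom_sum :: "nat \<Rightarrow> nat \<Rightarrow> nat \<Rightarrow> rat" where
  "binom_sum p k a =
     (-1) ^ (k + 1) * (\<Sum>s\<in>{1..<p}. (-1) ^ s * of_nat (a - 1 choose s) * (1 / of_nat s) ^ k)"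

lemma binom_sum_absorption:
  assumes "1 \<le> x"
  shows "1 / of_nat x * binom_sum p k (Suc x) =
    (-1) ^ (k + 1) * (\<Sum>s\<in>{1..<p}. (-1) ^ s * of_nat (x - 1 choose (s - 1)) * (1 / of_nat s) ^ (k + 1))"
proof -
  have "1 / of_nat x * binom_sum p k (Suc x) =
    (-1) ^ (k + 1) * (\<Sum>s\<in>{1..<p}. (-1) ^ s * (of_nat (x choose s) / of_nat x) * (1 / of_nat s) ^ k)"
    unfolding binom_sum_def by (simp add: sum_distrib_left)
  also have "\<dots> = (-1) ^ (k + 1) *
      (\<Sum>s\<in>{1..<p}. (-1) ^ s * (of_nat (x - 1 choose (s - 1)) / of_nat s) * (1 / of_nat s) ^ k)"
    using assms by (intro arg_cong2[where f = "(*)"] sum.cong refl) (simp add: binomial_absorption_div)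
  finally show ?thesis by simp
qed

lemma binom_sum_Suc_step:
  assumes "1 \<le> a"
  shows "binom_sum p (Suc k) a = 1 / of_nat a * binom_sum p k (Suc a) + binom_sum p (Suc k) (Suc a)"
proof -
  let ?u = "\<lambda>s. (-1) ^ s * (1 / of_nat s) ^ (k + 1) :: rat"
  have pascal: "of_nat (a choose s) = (of_nat (a - 1 choose s) + of_nat (a - 1 choose (s - 1)) :: rat)"
    if "s \<in> {1..<p}" for s
    using that assms binomial_Suc_Suc[of "a - 1" "s - 1"] by simp
  have "binom_sum p (Suc k) (Suc a) =
      (-1) ^ (k + 2) * (\<Sum>s\<in>{1..<p}. ?u s * of_nat (a choose s))"
    unfolding binom_sum_def by (simp add: ac_simps)
  also have "\<dots> = (-1) ^ (k + 2) * (\<Sum>s\<in>{1..<p}. ?u s * of_nat (a - 1 choose s))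
      + (-1) ^ (k + 2) * (\<Sum>s\<in>{1..<p}. ?u s * of_nat (a - 1 choose (s - 1)))"
    unfolding distrib_left[symmetric] sum.distrib[symmetric]
    by (intro arg_cong2[where f = "(*)"] sum.cong refl) (simp add: pascal distrib_left)
  also have "\<dots> = binom_sum p (Suc k) a - 1 / of_nat a * binom_sum p k (Suc a)"
    unfolding binom_sum_absorption[OF assms] by (simp add: binom_sum_def ac_simps)
  finally show ?thesis by simp
qed

lemma binom_sum_0:
  assumes "2 \<le> a" "a \<le> p"
  shows "binom_sum p 0 a = 1"
proof -
  let ?f = "\<lambda>s. (-1) ^ s * (of_nat (a - 1 choose s) :: rat)"
  have "(\<Sum>s<p. ?f s) = (\<Sum>s\<le>a - 1. ?f s)"
    by (rule sum.mono_neutral_right) (use assms in auto)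
  also have "\<dots> = 0" using choose_alternating_sum[of "a - 1"] assms by simp
  moreover have "{..<p} = insert 0 {1..<p}" using assms by auto
  ultimately have "?f 0 + (\<Sum>s\<in>{1..<p}. ?f s) = 0" by simp
  then show ?thesis unfolding binom_sum_def by simp
qed

section \<open>Binomial transforms of recurrent weights\<close>

definition binom_transform :: "nat \<Rightarrow> (nat \<Rightarrow> int) \<Rightarrow> nat \<Rightarrow> int" where
  "binom_transform p w j = (\<Sum>a\<in>{1..<p}. w a * int (a - 1 choose j))"

lemma binom_transform_eq_0: "p - 1 \<le> j \<Longrightarrow> binom_transform p w j = 0"
  unfolding binom_transform_def by (rule sum.neutral) auto

lemma choose_three_term:
  assumes "1 \<le> a"
  shows "int (a - 1 choose m) + (if 1 \<le> m then int (a - 1 choose (m - 1)) else 0)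
       + (if 2 \<le> m then int (a - 1 choose (m - 2)) else 0)
       = int (a - 1 choose m) - int (a choose m) + int (Suc a choose m)"
proof -
  obtain b where b: "a = Suc b" using assms by (cases a) auto
  consider "m = 0" | "m = 1" | m' where "m = Suc (Suc m')"
    by (metis One_nat_def not0_implies_Suc)
  then show ?thesis by cases (simp_all add: b)
qed

lemma sum_choose_three_term_telescope:
  fixes w :: "nat \<Rightarrow> int" and c :: int
  assumes rec: "\<And>a. w (a + 2) = w (a + 1) - w a - c" and "1 \<le> N"
  shows "(\<Sum>a\<in>{1..N}. w a * (int (a - 1 choose m) - int (a choose m) + int (Suc a choose m)))
       = (if m = 0 then w 1 + c else 0) - w 0 * int (1 choose m) - c * int (N choose Suc m)
         + (w (N - 1) - w N) * int (N choose m) + w N * int (Suc N choose m)"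
  using \<open>1 \<le> N\<close>
proof (induction N rule: nat_induct_at_least)
  case base
  then show ?case by (cases m) (simp_all add: algebra_simps)
next
  case (Suc N)
  then obtain M where N: "N = Suc M" by (cases N) auto
  have w: "w M = w (Suc M) - w (Suc (Suc M)) - c"
    using rec[of M] by simp
  have pascal: "int (Suc N choose Suc m) = int (N choose m) + int (N choose Suc m)"
    by simp
  let ?T = "\<lambda>a. w a * (int (a - 1 choose m) - int (a choose m) + int (Suc a choose m))"
  have "(\<Sum>a\<in>{1..Suc N}. ?T a) = (\<Sum>a\<in>{1..N}. ?T a) + ?T (Suc N)"
    by simp
  also have "\<dots> = (if m = 0 then w 1 + c else 0) - w 0 * int (1 choose m) - c * int (Suc N choose Suc m)
         + (w (Suc N - 1) - w (Suc N)) * int (Suc N choose m) + w (Suc N) * int (Suc (Suc N) choose m)"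
    unfolding Suc.IH pascal by (simp add: N w algebra_simps)
  finally show ?case .
qed

lemma binom_transform_three_term:
  fixes w :: "nat \<Rightarrow> int" and c :: int
  assumes rec: "\<And>a. w (a + 2) = w (a + 1) - w a - c" and "2 \<le> p"
  shows "binom_transform p w m + (if 1 \<le> m then binom_transform p w (m - 1) else 0)
       + (if 2 \<le> m then binom_transform p w (m - 2) else 0)
       = (if m = 0 then w 1 + c else 0) - w 0 * int (1 choose m) - c * int (p - 1 choose Suc m)
         + (w (p - 2) - w (p - 1)) * int (p - 1 choose m) + w (p - 1) * int (p choose m)"
proof -
  have ivl: "{1..<p} = {1..p - 1}" and "Suc (p - 1) = p" "p - 1 - 1 = p - 2"
    using assms(2) by auto
  have "binom_transform p w m + (if 1 \<le> m then binom_transform p w (m - 1) else 0)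
      + (if 2 \<le> m then binom_transform p w (m - 2) else 0)
      = (\<Sum>a\<in>{1..p - 1}. w a * (int (a - 1 choose m) + (if 1 \<le> m then int (a - 1 choose (m - 1)) else 0)
          + (if 2 \<le> m then int (a - 1 choose (m - 2)) else 0)))"
    unfolding binom_transform_def ivl
    by (cases "1 \<le> m"; cases "2 \<le> m") (simp_all add: sum.distrib distrib_left)
  also have "\<dots> = (\<Sum>a\<in>{1..p - 1}. w a * (int (a - 1 choose m) - int (a choose m) + int (Suc a choose m)))"
    by (intro sum.cong refl, subst choose_three_term) auto
  also have "\<dots> = (if m = 0 then w 1 + c else 0) - w 0 * int (1 choose m) - c * int (p - 1 choose Suc m)
         + (w (p - 2) - w (p - 1)) * int (p - 1 choose m) + w (p - 1) * int (p choose m)"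
    using sum_choose_three_term_telescope[OF rec, of "p - 1" m] assms(2) \<open>Suc (p - 1) = p\<close>
      \<open>p - 1 - 1 = p - 2\<close> by simp
  finally show ?thesis .
qed

lemma cong_reflect_three_term:
  fixes V r :: "nat \<Rightarrow> int" and e q :: int
  assumes "2 \<le> p"
    and vanish: "\<And>j. p - 1 \<le> j \<Longrightarrow> V j = 0"
    and rec: "\<And>m. V m + (if 1 \<le> m then V (m - 1) else 0) + (if 2 \<le> m then V (m - 2) else 0) = r m"
    and reflect: "\<And>j. j \<le> p - 2 \<Longrightarrow> [r (p - j) = e * r j] (mod q)"
  shows "j \<le> p - 2 \<Longrightarrow> [V (p - 2 - j) = e * V j] (mod q)"
proof (induction j rule: less_induct)
  case (less j)
  define V1 where "V1 = (if 1 \<le> j then V (j - 1) else 0)"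
  define V2 where "V2 = (if 2 \<le> j then V (j - 2) else 0)"
  have V1: "[V (p - j - 1) = e * V1] (mod q)"
  proof (cases "j = 0")
    case False
    then have "p - 2 - (j - 1) = p - j - 1" using less.prems by auto
    then show ?thesis using less.IH[of "j - 1"] less.prems False by (simp add: V1_def)
  qed (simp add: V1_def vanish)
  have V2: "[V (p - j) = e * V2] (mod q)"
  proof (cases "j \<le> 1")
    case False
    then have "p - 2 - (j - 2) = p - j" using less.prems by auto
    then show ?thesis using less.IH[of "j - 2"] less.prems False by (simp add: V2_def)
  qed (auto simp: V2_def vanish)
  have "2 \<le> p - j" "p - j - 2 = p - 2 - j" using less.prems \<open>2 \<le> p\<close> by auto
  then have "V (p - 2 - j) = r (p - j) - V (p - j - 1) - V (p - j)"
    using rec[of "p - j"] by simp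
  moreover have "V j = r j - V1 - V2"
    using rec[of j] unfolding V1_def V2_def by simp
  moreover have "[r (p - j) - V (p - j - 1) - V (p - j) = e * (r j - V1 - V2)] (mod q)"
    unfolding right_diff_distrib using reflect[OF less.prems] V1 V2 by (intro cong_diff)
  ultimately show ?case by simp
qed

section \<open>The weights of the two congruences\<close>

definition w_odd :: "nat \<Rightarrow> int" where
  "w_odd x = (if x mod 6 \<in> {1, 2} then 1 else 0) - (if x mod 6 \<in> {4, 5} then 1 else 0)"

definition w_even :: "nat \<Rightarrow> int" where
  "w_even x = (if x mod 3 = 0 then (-1) ^ x else 0) - (if x mod 6 \<in> {2, 3, 4} then 2 else 0)"

lemma w_odd_0 [simp]: "w_odd 0 = 0" and w_even_0 [simp]: "w_even 0 = 1"
  and w_even_1 [simp]: "w_even 1 = 0"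
  by (simp_all add: w_odd_def w_even_def)

lemma less_6_cases:
  assumes "(r :: nat) < 6"
  obtains "r = 0" | "r = 1" | "r = 2" | "r = 3" | "r = 4" | "r = 5"
  using assms by linarith

lemma w_odd_mod6: "w_odd x = w_odd (x mod 6)"
  by (simp add: w_odd_def)

lemma w_even_mod6: "w_even x = w_even (x mod 6)"
proof -
  have "x mod 6 mod 3 = x mod 3" "even (x mod 6) \<longleftrightarrow> even x"
    by (simp_all add: mod_mod_cancel even_iff_mod_2_eq_zero)
  then show ?thesis by (simp add: w_even_def minus_one_power_iff)
qed

lemma w_odd_rec: "w_odd (a + 2) = w_odd (a + 1) - w_odd a"
proof -
  have "w_odd (a + k) = w_odd (a mod 6 + k)" for k by (metis w_odd_mod6 mod_add_left_eq)
  moreover have "a mod 6 < 6" by simp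
  then have "w_odd (a mod 6 + 2) = w_odd (a mod 6 + 1) - w_odd (a mod 6)"
    by (cases rule: less_6_cases) (simp_all add: w_odd_def)
  ultimately show ?thesis by (metis add_0_right)
qed

lemma w_even_rec: "w_even (a + 2) = w_even (a + 1) - w_even a - 1"
proof -
  have "w_even (a + k) = w_even (a mod 6 + k)" for k by (metis w_even_mod6 mod_add_left_eq)
  moreover have "a mod 6 < 6" by simp
  then have "w_even (a mod 6 + 2) = w_even (a mod 6 + 1) - w_even (a mod 6) - 1"
    by (cases rule: less_6_cases) (simp_all add: w_even_def)
  ultimately show ?thesis by (metis add_0_right)
qed

lemma prime_pred_mod_6:
  assumes "prime (p :: nat)" "3 < p"
  obtains "(p - 2) mod 6 = 5" "(p - 1) mod 6 = 0" | "(p - 2) mod 6 = 3" "(p - 1) mod 6 = 4"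
proof -
  have "\<not> 2 dvd p" "\<not> 3 dvd p"
    using assms primes_dvd_imp_eq[of 2 p] primes_dvd_imp_eq[of 3 p] by auto
  then have mod_2_3: "p mod 6 mod 2 \<noteq> 0" "p mod 6 mod 3 \<noteq> 0"
    by (simp_all add: mod_mod_cancel dvd_eq_mod_eq_0)
  have "p = (p - 2) + 2" "p - 1 = (p - 2) + 1" using \<open>3 < p\<close> by auto
  then have shift: "p mod 6 = ((p - 2) mod 6 + 2) mod 6" "(p - 1) mod 6 = ((p - 2) mod 6 + 1) mod 6"
    by (metis mod_add_left_eq)+
  have "(p - 2) mod 6 < 6" by simp
  then show ?thesis using mod_2_3 shift that by (cases rule: less_6_cases) auto
qed

lemma w_odd_boundary:
  assumes "prime p" "3 \<le> p"
  shows "[w_odd 1 + w_odd (p - 2) + w_odd (p - 1) = 0] (mod int p)"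
proof (cases "p = 3")
  case True
  then show ?thesis by (simp add: w_odd_def cong_def)
next
  case False
  with assms have "3 < p" by simp
  with \<open>prime p\<close> show ?thesis
    by (cases rule: prime_pred_mod_6)
       (simp_all only: w_odd_mod6[of "p - 2"] w_odd_mod6[of "p - 1"], simp_all add: w_odd_def)
qed

lemma w_even_boundary:
  assumes "prime p" "3 < p"
  shows "w_even (p - 2) - w_even (p - 1) = -1"
  using assms
  by (cases rule: prime_pred_mod_6)
     (simp_all only: w_even_mod6[of "p - 2"] w_even_mod6[of "p - 1"], simp_all add: w_even_def)

section \<open>Congruences modulo a prime\<close>

definition p_integral :: "nat \<Rightarrow> rat \<Rightarrow> bool" where
  "p_integral p q \<longleftrightarrow> (\<exists>a b. \<not> int p dvd b \<and> q = of_int a / of_int b)"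

definition p_cong :: "nat \<Rightarrow> rat \<Rightarrow> rat \<Rightarrow> bool" where
  "p_cong p x y \<longleftrightarrow> (\<exists>c. p_integral p c \<and> x - y = of_nat p * c)"

lemma p_cong_iff_diff_0: "p_cong p x y \<longleftrightarrow> p_cong p (x - y) 0"
  by (simp add: p_cong_def)

context
  fixes p :: nat
  assumes prime_p: "prime p"
begin

lemma p_integral_of_int [simp]: "p_integral p (of_int z)"
  unfolding p_integral_def using prime_p
  by (intro exI[of _ z] exI[of _ 1]) (auto simp: prime_gt_1_nat)

lemma p_integral_0 [simp]: "p_integral p 0" and p_integral_1 [simp]: "p_integral p 1"
  using p_integral_of_int[of 0] p_integral_of_int[of 1] by simp_all

lemma p_integral_minus_one_power [simp]: "p_integral p ((-1) ^ k)"
  using p_integral_of_int[of "(-1) ^ k"] by simp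

lemma p_integral_mult [intro]:
  assumes "p_integral p x" "p_integral p y"
  shows "p_integral p (x * y)"
proof -
  obtain a b c d where "\<not> int p dvd b" "x = of_int a / of_int b" "\<not> int p dvd d" "y = of_int c / of_int d"
    using assms unfolding p_integral_def by blast
  moreover have "\<not> int p dvd b * d" if "\<not> int p dvd b" "\<not> int p dvd d"
    using that prime_p prime_dvd_mult_iff[of "int p"] by auto
  ultimately show ?thesis unfolding p_integral_def by (intro exI[of _ "a * c"] exI[of _ "b * d"]) auto
qed

lemma p_integral_add [intro]:
  assumes "p_integral p x" "p_integral p y"
  shows "p_integral p (x + y)"
proof -
  obtain a b c d where ab: "\<not> int p dvd b" "x = of_int a / of_int b"
    and cd: "\<not> int p dvd d" "y = of_int c / of_int d"
    using assms unfolding p_integral_def by blast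
  then have "\<not> int p dvd b * d" using prime_p prime_dvd_mult_iff[of "int p"] by auto
  moreover have "x + y = of_int (a * d + c * b) / of_int (b * d)"
  proof -
    have "b \<noteq> 0" "d \<noteq> 0" using ab(1) cd(1) by auto
    then show ?thesis using ab(2) cd(2) by (simp add: add_frac_eq)
  qed
  ultimately show ?thesis unfolding p_integral_def by blast
qed

lemma p_integral_minus [intro]: "p_integral p x \<Longrightarrow> p_integral p (- x)"
  using p_integral_mult[of "-1" x] p_integral_of_int[of "-1"] by simp

lemma p_integral_power [intro]: "p_integral p x \<Longrightarrow> p_integral p (x ^ k)"
  by (induction k) auto

lemma p_integral_inverse_of_nat:
  assumes "0 < s" "s < p"
  shows "p_integral p (1 / of_nat s)"
proof -
  have "\<not> int p dvd int s" using assms by (auto dest: zdvd_imp_le)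
  then show ?thesis unfolding p_integral_def by (intro exI[of _ 1] exI[of _ "int s"]) auto
qed

lemma p_integral_inverse_power [simp]: "s \<in> {1..<p} \<Longrightarrow> p_integral p ((1 / of_nat s) ^ k)"
  by (intro p_integral_power p_integral_inverse_of_nat) auto

lemma p_cong_refl [simp]: "p_cong p x x"
  unfolding p_cong_def by (intro exI[of _ 0]) (auto simp: p_integral_of_int[of 0, simplified])

lemma p_cong_sym: "p_cong p x y \<Longrightarrow> p_cong p y x"
  unfolding p_cong_def by (metis minus_diff_eq mult_minus_right p_integral_minus)

lemma p_cong_trans [trans]:
  assumes "p_cong p x y" "p_cong p y z"
  shows "p_cong p x z"
proof -
  obtain c d where "p_integral p c" "x - y = of_nat p * c" "p_integral p d" "y - z = of_nat p * d"
    using assms unfolding p_cong_def by blast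
  then show ?thesis unfolding p_cong_def by (intro exI[of _ "c + d"]) (auto simp: algebra_simps)
qed

lemma p_cong_add:
  assumes "p_cong p x y" "p_cong p u v"
  shows "p_cong p (x + u) (y + v)"
proof -
  obtain c d where "p_integral p c" "x - y = of_nat p * c" "p_integral p d" "u - v = of_nat p * d"
    using assms unfolding p_cong_def by blast
  then show ?thesis unfolding p_cong_def by (intro exI[of _ "c + d"]) (auto simp: algebra_simps)
qed

lemma p_cong_mult_left:
  assumes "p_integral p a" "p_cong p x y"
  shows "p_cong p (a * x) (a * y)"
proof -
  obtain c where "p_integral p c" "x - y = of_nat p * c"
    using assms unfolding p_cong_def by blast
  then have "a * x - a * y = of_nat p * (a * c)" by (metis mult.left_commute right_diff_distrib)
  then show ?thesis unfolding p_cong_def using assms(1) \<open>p_integral p c\<close> by blast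
qed

lemma p_cong_mult:
  assumes "p_integral p u" "p_integral p y" "p_cong p x y" "p_cong p u v"
  shows "p_cong p (x * u) (y * v)"
proof -
  have "p_cong p (x * u) (y * u)"
    using p_cong_mult_left[OF assms(1,3)] by (simp add: mult.commute)
  also have "p_cong p (y * u) (y * v)" using assms(2,4) by (rule p_cong_mult_left)
  finally show ?thesis .
qed

lemma p_cong_sum: "(\<And>i. i \<in> A \<Longrightarrow> p_cong p (f i) (g i)) \<Longrightarrow> p_cong p (sum f A) (sum g A)"
  by (induction A rule: infinite_finite_induct) (auto intro: p_cong_add)

lemma p_cong_power: "p_integral p x \<Longrightarrow> p_integral p y \<Longrightarrow> p_cong p x y \<Longrightarrow> p_cong p (x ^ k) (y ^ k)"
  by (induction k) (auto intro: p_cong_mult)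

lemma p_cong_of_int:
  assumes "[a = b] (mod int p)"
  shows "p_cong p (of_int a) (of_int b)"
proof -
  obtain k where "a - b = int p * k"
    using assms by (metis cong_iff_dvd_diff dvd_def)
  then have "of_int a - of_int b = (of_nat p :: rat) * of_int k"
    by (metis of_int_diff of_int_mult of_int_of_nat_eq)
  then show ?thesis unfolding p_cong_def by (intro exI[of _ "of_int k"]) auto
qed

lemma p_cong_imp_rat_cong:
  assumes "p_cong p x y"
  shows "rat_cong x y (int p)"
proof -
  obtain a b where ab: "\<not> int p dvd b" "x - y = of_nat p * (of_int a / of_int b)"
    using assms unfolding p_cong_def p_integral_def by blast
  obtain n d where nd: "quotient_of (x - y) = (n, d)" by (cases "quotient_of (x - y)")
  have "d > 0" using quotient_of_denom_pos[OF nd] .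
  moreover have "b \<noteq> 0" using ab by auto
  moreover have "of_int n / of_int d = (of_nat p :: rat) * (of_int a / of_int b)"
    using quotient_of_div[OF nd] ab by simp
  ultimately have "of_int (n * b) = (of_int (int p * a * d) :: rat)"
    by (simp add: field_simps)
  then have "n * b = int p * a * d" by (simp only: of_int_eq_iff)
  then have "int p dvd n * b" by (metis dvd_triv_left mult.assoc)
  then have "int p dvd n" using ab prime_p prime_dvd_mult_iff[of "int p"] by auto
  then show ?thesis unfolding rat_cong_def using nd by simp
qed

lemma cong_choose_prime_0:
  assumes "0 < k" "k < p"
  shows "[int (p choose k) = 0] (mod int p)"
proof -
  have "p dvd (p choose k)" using assms prime_p by (intro dvd_choose_prime) auto
  then show ?thesis by (simp add: cong_0_iff)
qed

lemma cong_choose_pred_prime: "s \<le> p - 1 \<Longrightarrow> [int (p - 1 choose s) = (-1) ^ s] (mod int p)"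
proof (induction s)
  case (Suc s)
  have "p choose Suc s = (p - 1 choose s) + (p - 1 choose Suc s)"
    using prime_gt_0_nat[OF prime_p] binomial_Suc_Suc[of "p - 1" s] by simp
  then have "int (p - 1 choose Suc s) = int (p choose Suc s) - int (p - 1 choose s)"
    by simp
  also have "[\<dots> = 0 - (-1) ^ s] (mod int p)"
    using Suc by (intro cong_diff cong_choose_prime_0) auto
  finally show ?case by simp
qed simp

text \<open>Expanding the telescoping sum \<open>(\<Sum>s<p. (s + 1)^(m+1) - s^(m+1)) = p^(m+1)\<close> binomially
  expresses \<open>(m + 1) * (\<Sum>s<p. s^m)\<close> through lower power sums.\<close>
lemma sum_powers_cong_0: "m \<le> p - 2 \<Longrightarrow> [(\<Sum>s<p. int s ^ m) = 0] (mod int p)"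
proof (induction m rule: less_induct)
  case (less m)
  define P where "P j = (\<Sum>s<p. int s ^ j)" for j
  have "(int s + 1) ^ (m + 1) - int s ^ (m + 1) = (\<Sum>j<m + 1. int (m + 1 choose j) * int s ^ j)" for s
  proof -
    have "(int s + 1) ^ (m + 1) = (\<Sum>j\<le>m + 1. int (m + 1 choose j) * int s ^ j)"
      by (subst binomial_ring) (simp add: mult.commute)
    then show ?thesis by (simp add: lessThan_Suc_atMost[symmetric])
  qed
  moreover have "(\<Sum>s<p. (int s + 1) ^ (m + 1) - int s ^ (m + 1)) = int p ^ (m + 1)"
    using sum_lessThan_telescope[of "\<lambda>s. int s ^ (m + 1)" p] by (simp add: add.commute)
  ultimately have "(\<Sum>j<m + 1. int (m + 1 choose j) * P j) = int p ^ (m + 1)"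
    unfolding P_def by (simp add: sum_distrib_left sum.swap[of _ "{..<p}"])
  then have "int (m + 1) * P m = int p ^ (m + 1) - (\<Sum>j<m. int (m + 1 choose j) * P j)"
    by simp
  also have "[\<dots> = 0 - (\<Sum>j<m. int (m + 1 choose j) * 0)] (mod int p)"
    using less by (intro cong_diff cong_sum cong_mult cong_refl) (auto simp: P_def cong_0_iff)
  finally have "int p dvd int (m + 1) * P m" by (simp add: cong_0_iff)
  moreover have "\<not> int p dvd int (m + 1)"
    using less.prems prime_ge_2_nat[OF prime_p] by (auto dest: zdvd_imp_le)
  ultimately have "int p dvd P m" using prime_p prime_dvd_mult_iff[of "int p"] by auto
  then show ?case by (simp add: P_def cong_0_iff)
qed

lemma p_cong_inverse_power:
  assumes "s \<in> {1..<p}" "k \<le> p - 1"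
  shows "p_cong p ((1 / of_nat s) ^ k) (of_nat (s ^ (p - 1 - k)))"
proof -
  have "[s ^ (p - 1) = 1] (mod p)"
    using assms prime_p by (intro fermat_theorem) (auto dest: dvd_imp_le)
  then have "p_cong p (of_int (int (s ^ (p - 1)))) (of_int 1)"
    by (intro p_cong_of_int) (metis cong_int_iff of_nat_1)
  then have "p_cong p ((1 / of_nat s) ^ k * of_nat (s ^ (p - 1))) ((1 / of_nat s) ^ k * 1)"
    using assms by (intro p_cong_mult_left) simp_all
  moreover have "(1 / of_nat s :: rat) ^ k * of_nat (s ^ (p - 1)) = of_nat (s ^ (p - 1 - k))"
  proof -
    have "p - 1 - k + k = p - 1" using assms by simp
    then have "s ^ (p - 1) = s ^ (p - 1 - k) * s ^ k" by (metis power_add)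
    then show ?thesis using assms by (simp add: field_simps)
  qed
  ultimately have "p_cong p (of_nat (s ^ (p - 1 - k))) ((1 / of_nat s) ^ k)" by simp
  then show ?thesis by (rule p_cong_sym)
qed

text \<open>Each term of \<open>binom_sum p k p\<close> is congruent to \<open>s ^ (p - 1 - k)\<close>, and these power sums vanish.\<close>
lemma binom_sum_top_cong_0:
  assumes "1 \<le> k" "k \<le> p - 2"
  shows "p_cong p (binom_sum p k p) 0"
proof -
  have "p_cong p ((-1) ^ s * of_nat (p - 1 choose s) * (1 / of_nat s) ^ k) (1 * of_int (int s ^ (p - 1 - k)))"
    if s: "s \<in> {1..<p}" for s
  proof (rule p_cong_mult)
    have "p_cong p (of_int ((-1) ^ s * int (p - 1 choose s))) (of_int ((-1) ^ s * (-1) ^ s))"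
      using cong_choose_pred_prime[of s] s by (intro p_cong_of_int cong_mult cong_refl) auto
    then show "p_cong p ((-1) ^ s * of_nat (p - 1 choose s)) 1" by simp
    show "p_cong p ((1 / of_nat s) ^ k) (of_int (int s ^ (p - 1 - k)))"
      using p_cong_inverse_power[OF s] assms by simp
  qed (use s in simp_all)
  then have "p_cong p (\<Sum>s\<in>{1..<p}. (-1) ^ s * of_nat (p - 1 choose s) * (1 / of_nat s) ^ k)
      (of_int (\<Sum>s\<in>{1..<p}. int s ^ (p - 1 - k)))"
    unfolding of_int_sum by (intro p_cong_sum) simp
  also have "p_cong p \<dots> 0"
  proof -
    have "{..<p} = insert 0 {1..<p}" using prime_gt_0_nat[OF prime_p] by auto
    moreover have "p - 1 - k \<le> p - 2" "0 < p - 1 - k" using assms by auto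
    ultimately have "[(\<Sum>s\<in>{1..<p}. int s ^ (p - 1 - k)) = 0] (mod int p)"
      using sum_powers_cong_0[of "p - 1 - k"] by (simp add: power_0_left)
    then show ?thesis using p_cong_of_int by fastforce
  qed
  finally have "p_cong p ((-1) ^ (k + 1) *
      (\<Sum>s\<in>{1..<p}. (-1) ^ s * of_nat (p - 1 choose s) * (1 / of_nat s) ^ k)) ((-1) ^ (k + 1) * 0)"
    by (rule p_cong_mult_left[OF p_integral_minus_one_power])
  then show ?thesis unfolding binom_sum_def by simp
qed

lemma mhs_cong_binom_sum:
  assumes "k \<le> p - 2" "2 \<le> a" "a \<le> p"
  shows "p_cong p (mhs p k a) (binom_sum p k a)"
  using assms
proof (induction k arbitrary: a)
  case 0
  then show ?case by (simp add: binom_sum_0)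
next
  case (Suc k)
  have "p_cong p (mhs p (Suc k) b) (binom_sum p (Suc k) b)" if "1 \<le> b" "b \<le> p" for b
    using \<open>b \<le> p\<close>
  proof (induction b rule: inc_induct)
    case base
    show ?case using p_cong_sym[OF binom_sum_top_cong_0[of "Suc k"]] Suc.prems by simp
  next
    case (step c)
    have c: "1 \<le> c" "c < p" using step.hyps that by auto
    have "p_cong p (mhs p k (Suc c)) (binom_sum p k (Suc c))"
      by (rule Suc.IH) (use Suc.prems c in auto)
    then have "p_cong p (1 / of_nat c * mhs p k (Suc c) + mhs p (Suc k) (Suc c))
        (1 / of_nat c * binom_sum p k (Suc c) + binom_sum p (Suc k) (Suc c))"
      using step.IH c by (intro p_cong_add p_cong_mult_left p_integral_inverse_of_nat) auto
    then show ?case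
      using mhs_Suc_step[OF c(2), of k] binom_sum_Suc_step[OF c(1), of p k] by simp
  qed
  then show ?case using Suc.prems by simp
qed

lemma weighted_mhs_cong:
  assumes "k \<le> p - 2"
  shows "p_cong p (\<Sum>x\<in>{1..<p}. of_int (w x) * (1 / of_nat x * mhs p k (Suc x)))
    ((-1) ^ (k + 1) * (\<Sum>s\<in>{1..<p}. (-1) ^ s * (1 / of_nat s) ^ (k + 1) * of_int (binom_transform p w (s - 1))))"
proof -
  have "p_cong p (\<Sum>x\<in>{1..<p}. of_int (w x) * (1 / of_nat x * mhs p k (Suc x)))
      (\<Sum>x\<in>{1..<p}. of_int (w x) * (1 / of_nat x * binom_sum p k (Suc x)))"
    using assms by (intro p_cong_sum p_cong_mult_left mhs_cong_binom_sum p_integral_mult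
        p_integral_inverse_of_nat) auto
  also have "\<dots> = (\<Sum>x\<in>{1..<p}. \<Sum>s\<in>{1..<p}. (-1) ^ (k + 1) *
      ((-1) ^ s * (1 / of_nat s) ^ (k + 1) * (of_int (w x) * of_nat (x - 1 choose (s - 1)))))"
    by (intro sum.cong refl, subst binom_sum_absorption) (auto simp: sum_distrib_left ac_simps)
  also have "\<dots> = (-1) ^ (k + 1) *
      (\<Sum>s\<in>{1..<p}. (-1) ^ s * (1 / of_nat s) ^ (k + 1) * of_int (binom_transform p w (s - 1)))"
    unfolding binom_transform_def by (subst sum.swap) (simp add: sum_distrib_left)
  finally show ?thesis .
qed

lemma p_cong_inverse_reflect:
  assumes "s \<in> {1..<p}"
  shows "p_cong p (1 / of_nat (p - s)) (- (1 / of_nat s))"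
proof -
  have "1 / of_nat (p - s) - (- (1 / of_nat s)) = (of_nat p :: rat) * (1 / of_nat s * (1 / of_nat (p - s)))"
    using assms by (simp add: field_simps)
  moreover have "p_integral p (1 / of_nat s * (1 / of_nat (p - s)))"
    using assms by (intro p_integral_mult p_integral_inverse_of_nat) auto
  ultimately show ?thesis unfolding p_cong_def by blast
qed

lemma sum_antisymmetric_p_cong_0:
  assumes "odd p" and antisym: "\<And>s. s \<in> {1..<p} \<Longrightarrow> p_cong p (t (p - s)) (- t s)"
  shows "p_cong p (\<Sum>s\<in>{1..<p}. t s) 0"
proof -
  have "(\<Sum>s\<in>{1..<p}. t s) = (\<Sum>s\<in>{1..<p}. t (p - s))"
    by (subst sum.atLeastLessThan_rev) simp
  also have "p_cong p \<dots> (\<Sum>s\<in>{1..<p}. - t s)"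
    by (intro p_cong_sum antisym)
  finally obtain c where c: "p_integral p c" "(\<Sum>s\<in>{1..<p}. t s) - (\<Sum>s\<in>{1..<p}. - t s) = of_nat p * c"
    unfolding p_cong_def by blast
  have "2 < p" using \<open>odd p\<close> prime_ge_2_nat[OF prime_p] by (cases "p = 2") auto
  then have "p_integral p (c * (1 / of_nat 2))"
    using c(1) by (intro p_integral_mult p_integral_inverse_of_nat) auto
  moreover have "(\<Sum>s\<in>{1..<p}. t s) - 0 = of_nat p * (c * (1 / of_nat 2))"
    using c(2) by (simp add: sum_negf field_simps)
  ultimately show ?thesis unfolding p_cong_def by blast
qed

text \<open>Modulo \<open>p\<close>, \<open>s \<mapsto> p - s\<close> flips the sign of \<open>(-1)^s\<close> and multiplies \<open>(1/s)^(k+1)\<close> by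
  \<open>(-1)^(k+1)\<close>, so the symmetry of the binomial transform makes the summands antisymmetric.\<close>
lemma weighted_mhs_cong_0:
  assumes "k \<le> p - 2" "odd p"
    and sym: "\<And>j. j \<le> p - 2 \<Longrightarrow>
      [binom_transform p w (p - 2 - j) = (-1) ^ (k + 1) * binom_transform p w j] (mod int p)"
  shows "p_cong p (\<Sum>x\<in>{1..<p}. of_int (w x) * (1 / of_nat x * mhs p k (Suc x))) 0"
proof -
  define t :: "nat \<Rightarrow> rat"
    where "t s = (-1) ^ s * (1 / of_nat s) ^ (k + 1) * of_int (binom_transform p w (s - 1))" for s
  have "p_cong p (t (p - s)) (- t s)" if s: "s \<in> {1..<p}" for s
  proof -
    have sign: "(-1) ^ (p - s) = - ((-1) ^ s :: rat)"
      using s \<open>odd p\<close> by (simp add: minus_one_power_iff)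
    have "p_cong p ((1 / of_nat (p - s)) ^ (k + 1) * of_int (binom_transform p w (p - 2 - (s - 1))))
        ((- (1 / of_nat s)) ^ (k + 1) * of_int ((-1) ^ (k + 1) * binom_transform p w (s - 1)))"
      using s by (intro p_cong_mult p_cong_power p_cong_inverse_reflect p_cong_of_int sym
          p_integral_power p_integral_minus p_integral_inverse_of_nat) auto
    then have "p_cong p (- ((-1) ^ s) * ((1 / of_nat (p - s)) ^ (k + 1) *
          of_int (binom_transform p w (p - 2 - (s - 1)))))
        (- ((-1) ^ s) * ((- (1 / of_nat s)) ^ (k + 1) * of_int ((-1) ^ (k + 1) * binom_transform p w (s - 1))))"
      by (intro p_cong_mult_left p_integral_minus) simp_all
    moreover have "p - 2 - (s - 1) = p - s - 1" using s by auto
    ultimately show ?thesis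
      unfolding t_def sign by (simp add: power_minus[of "1 / of_nat s"] mult_ac)
  qed
  then have "p_cong p ((-1) ^ (k + 1) * (\<Sum>s\<in>{1..<p}. t s)) ((-1) ^ (k + 1) * 0)"
    by (intro p_cong_mult_left p_integral_minus_one_power sum_antisymmetric_p_cong_0 \<open>odd p\<close>)
  with weighted_mhs_cong[OF assms(1), of w] show ?thesis
    unfolding t_def by (simp add: p_cong_trans)
qed

lemma choose_combination_reflect_odd:
  fixes u \<alpha> \<beta> :: int
  assumes "3 \<le> p" "i \<le> p - 2" and boundary: "[u + \<alpha> + 2 * \<beta> = 0] (mod int p)"
  defines "r \<equiv> \<lambda>m. (if m = 0 then u else 0) + \<alpha> * int (p - 1 choose m) + \<beta> * int (p choose m)"
  shows "[r (p - i) = - r i] (mod int p)"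
proof (cases "i = 0")
  case True
  have "[\<beta> = \<beta> - (u + \<alpha> + 2 * \<beta>)] (mod int p)"
    using cong_sym[OF cong_diff[OF cong_refl[of \<beta>] boundary]] by simp
  then show ?thesis using True \<open>3 \<le> p\<close> by (simp add: r_def binomial_eq_0 algebra_simps)
next
  case False
  then have i: "0 < i" "i < p" "0 < p - i" "p - i < p" "p - i \<le> p - 1" "i \<le> p - 1"
    using assms by auto
  have sign: "(-1) ^ (p - i) = - ((-1) ^ i :: int)"
    using i prime_odd_nat[OF prime_p] \<open>3 \<le> p\<close> by (simp add: minus_one_power_iff)
  have "r (p - i) = \<alpha> * int (p - 1 choose (p - i)) + \<beta> * int (p choose (p - i))"
    using i by (simp add: r_def)
  also have "[\<dots> = \<alpha> * (-1) ^ (p - i) + \<beta> * 0] (mod int p)"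
    using i by (intro cong_add cong_mult cong_refl cong_choose_pred_prime cong_choose_prime_0)
  also have "\<alpha> * (-1) ^ (p - i) + \<beta> * 0 = - (\<alpha> * (-1) ^ i + \<beta> * 0)"
    using sign by simp
  also have "[\<dots> = - (\<alpha> * int (p - 1 choose i) + \<beta> * int (p choose i))] (mod int p)"
    using i by (intro cong_minus_minus_iff[THEN iffD2] cong_add cong_mult cong_refl
        cong_sym[OF cong_choose_pred_prime] cong_sym[OF cong_choose_prime_0])
  also have "\<alpha> * int (p - 1 choose i) + \<beta> * int (p choose i) = r i"
    using i by (simp add: r_def)
  finally show ?thesis .
qed

lemma choose_combination_reflect_even:
  fixes \<beta> :: int
  assumes "3 < p" "i \<le> p - 2"
  defines "r \<equiv> \<lambda>m. (if m = 0 then 1 else 0) - int (1 choose m) - int (p choose Suc m) + \<beta> * int (p choose m)"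
  shows "[r (p - i) = r i] (mod int p)"
proof -
  consider "i = 0" | "i = 1" | "2 \<le> i" by linarith
  then show ?thesis
  proof cases
    case 1
    have "[\<beta> = \<beta> - int p] (mod int p)" by (simp add: cong_iff_dvd_diff)
    then show ?thesis using 1 \<open>3 < p\<close> by (simp add: r_def binomial_eq_0)
  next
    case 2
    have "p choose (p - 1) = p" using binomial_symmetric[of "p - 1" p] \<open>3 < p\<close> by simp
    moreover have "1 choose (p - 1) = 0" using \<open>3 < p\<close> by (intro binomial_eq_0) auto
    ultimately have "r (p - 1) - r 1 = int (p choose 2)"
      using \<open>3 < p\<close> by (simp add: r_def numeral_2_eq_2)
    moreover have "[int (p choose 2) = 0] (mod int p)"
      using \<open>3 < p\<close> by (intro cong_choose_prime_0) auto
    ultimately show ?thesis using 2 by (simp add: cong_iff_dvd_diff cong_0_iff)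
  next
    case 3
    have zero: "[r m = 0] (mod int p)" if "2 \<le> m" "Suc m < p" for m
    proof -
      have "r m = - int (p choose Suc m) + \<beta> * int (p choose m)"
        using that by (simp add: r_def binomial_eq_0)
      also have "[\<dots> = - 0 + \<beta> * 0] (mod int p)"
        using that by (intro cong_add cong_mult cong_refl cong_minus_minus_iff[THEN iffD2]
            cong_choose_prime_0) auto
      finally show ?thesis by simp
    qed
    have "[r (p - i) = 0] (mod int p)" "[r i = 0] (mod int p)"
      using 3 \<open>i \<le> p - 2\<close> by (intro zero; linarith)+
    then show ?thesis by (metis cong_sym cong_trans)
  qed
qed

lemma binom_transform_antisymmetric:
  fixes w :: "nat \<Rightarrow> int"
  assumes rec: "\<And>a. w (a + 2) = w (a + 1) - w a" and "w 0 = 0" and "3 \<le> p"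
    and boundary: "[w 1 + w (p - 2) + w (p - 1) = 0] (mod int p)"
    and "j \<le> p - 2"
  shows "[binom_transform p w (p - 2 - j) = - binom_transform p w j] (mod int p)"
proof -
  define r where "r m = (if m = 0 then w 1 else 0) + (w (p - 2) - w (p - 1)) * int (p - 1 choose m)
    + w (p - 1) * int (p choose m)" for m
  have "binom_transform p w m + (if 1 \<le> m then binom_transform p w (m - 1) else 0)
      + (if 2 \<le> m then binom_transform p w (m - 2) else 0) = r m" for m
    using binom_transform_three_term[of w 0 p m] rec \<open>w 0 = 0\<close> \<open>3 \<le> p\<close> by (simp add: r_def)
  moreover have "[r (p - i) = -1 * r i] (mod int p)" if "i \<le> p - 2" for i
    using choose_combination_reflect_odd[OF \<open>3 \<le> p\<close> that, of "w 1" "w (p - 2) - w (p - 1)" "w (p - 1)"]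
      boundary by (simp add: r_def algebra_simps)
  ultimately have "[binom_transform p w (p - 2 - j) = -1 * binom_transform p w j] (mod int p)"
    using \<open>3 \<le> p\<close> \<open>j \<le> p - 2\<close> binom_transform_eq_0 by (intro cong_reflect_three_term[where r = r]) auto
  then show ?thesis by simp
qed

lemma binom_transform_symmetric:
  fixes w :: "nat \<Rightarrow> int"
  assumes rec: "\<And>a. w (a + 2) = w (a + 1) - w a - 1" and "w 0 = 1" "w 1 = 0" and "3 < p"
    and boundary: "w (p - 2) - w (p - 1) = -1"
    and "j \<le> p - 2"
  shows "[binom_transform p w (p - 2 - j) = binom_transform p w j] (mod int p)"
proof -
  define r where "r m = (if m = 0 then 1 else 0) - int (1 choose m) - int (p choose Suc m)
    + w (p - 1) * int (p choose m)" for m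
  have "binom_transform p w m + (if 1 \<le> m then binom_transform p w (m - 1) else 0)
      + (if 2 \<le> m then binom_transform p w (m - 2) else 0) = r m" for m
  proof -
    have pascal: "int (p choose Suc m) = int (p - 1 choose m) + int (p - 1 choose Suc m)"
      using \<open>3 < p\<close> binomial_Suc_Suc[of "p - 1" m] by simp
    have "binom_transform p w m + (if 1 \<le> m then binom_transform p w (m - 1) else 0)
      + (if 2 \<le> m then binom_transform p w (m - 2) else 0)
      = (if m = 0 then w 1 + 1 else 0) - w 0 * int (1 choose m) - 1 * int (p - 1 choose Suc m)
         + (w (p - 2) - w (p - 1)) * int (p - 1 choose m) + w (p - 1) * int (p choose m)"
      using \<open>3 < p\<close> by (intro binom_transform_three_term rec) auto
    then show ?thesis
      unfolding r_def boundary \<open>w 0 = 1\<close> \<open>w 1 = 0\<close> pascal by simp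
  qed
  moreover have "[r (p - i) = 1 * r i] (mod int p)" if "i \<le> p - 2" for i
    using choose_combination_reflect_even[OF \<open>3 < p\<close> that] by (simp add: r_def)
  ultimately have "[binom_transform p w (p - 2 - j) = 1 * binom_transform p w j] (mod int p)"
    using \<open>3 < p\<close> \<open>j \<le> p - 2\<close> binom_transform_eq_0 by (intro cong_reflect_three_term[where r = r]) auto
  then show ?thesis by simp
qed

lemma incr_tuples_weighted_sum_cong_0:
  assumes "Suc k + 1 < p"
    and sym: "\<And>j. j \<le> p - 2 \<Longrightarrow>
      [binom_transform p w (p - 2 - j) = (-1) ^ (k + 1) * binom_transform p w j] (mod int p)"
  shows "p_cong p (\<Sum>xs\<in>incr_tuples (Suc k) p. of_int (w (hd xs)) / (\<Prod>i\<leftarrow>xs. of_nat i)) 0"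
proof -
  have "odd p" using assms(1) prime_p by (intro prime_odd_nat) auto
  then show ?thesis
    unfolding sum_incr_tuples_by_head[of "\<lambda>h. of_int (w h)"] using assms
    by (intro weighted_mhs_cong_0) auto
qed

lemma w_odd_weighted_sum_cong_0:
  assumes "n + 1 < p" "odd n"
  shows "p_cong p (\<Sum>xs\<in>incr_tuples n p. of_int (w_odd (hd xs)) / (\<Prod>i\<leftarrow>xs. of_nat i)) 0"
proof -
  obtain k where n: "n = Suc k" using \<open>odd n\<close> by (cases n) auto
  have "[binom_transform p w_odd (p - 2 - j) = (-1) ^ (k + 1) * binom_transform p w_odd j] (mod int p)"
    if "j \<le> p - 2" for j
    using binom_transform_antisymmetric[OF w_odd_rec w_odd_0 _ w_odd_boundary[OF prime_p] that]
      assms n by simp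
  then show ?thesis using assms(1) unfolding n by (intro incr_tuples_weighted_sum_cong_0) auto
qed

lemma w_even_weighted_sum_cong_0:
  assumes "0 < n" "n + 1 < p" "even n"
  shows "p_cong p (\<Sum>xs\<in>incr_tuples n p. of_int (w_even (hd xs)) / (\<Prod>i\<leftarrow>xs. of_nat i)) 0"
proof -
  obtain k where n: "n = Suc k" using \<open>0 < n\<close> by (cases n) auto
  then have "3 < p" using assms by (cases k) auto
  have "[binom_transform p w_even (p - 2 - j) = (-1) ^ (k + 1) * binom_transform p w_even j] (mod int p)"
    if "j \<le> p - 2" for j
    using binom_transform_symmetric[OF w_even_rec w_even_0 w_even_1 \<open>3 < p\<close>
        w_even_boundary[OF prime_p \<open>3 < p\<close>] that] assms n by simp
  then show ?thesis using assms(2) unfolding n by (intro incr_tuples_weighted_sum_cong_0) auto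
qed

end

theorem theorem1p1:
  fixes n p :: nat
  assumes "n > 0" and "prime p" and "p > n + 1"
  shows "(odd n \<longrightarrow>
           rat_cong
             (\<Sum>xs\<in>{xs\<in>incr_tuples n p. hd xs mod 6 \<in> {1, 2}}. 1 / (\<Prod>i\<leftarrow>xs. of_nat i))
             (\<Sum>xs\<in>{xs\<in>incr_tuples n p. hd xs mod 6 \<in> {4, 5}}. 1 / (\<Prod>i\<leftarrow>xs. of_nat i))
             (int p))
       \<and> (even n \<longrightarrow>
           rat_cong
             (\<Sum>xs\<in>{xs\<in>incr_tuples n p. hd xs mod 3 = 0}. (-1) ^ hd xs / (\<Prod>i\<leftarrow>xs. of_nat i))
             (2 * (\<Sum>xs\<in>{xs\<in>incr_tuples n p. hd xs mod 6 \<in> {2, 3, 4}}. 1 / (\<Prod>i\<leftarrow>xs. of_nat i)))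
             (int p))"
proof -
  show ?thesis (is "(_ \<longrightarrow> rat_cong ?A ?B _) \<and> (_ \<longrightarrow> rat_cong ?C ?D _)")
  proof (intro conjI impI)
    assume "odd n"
    have "?A - ?B = (\<Sum>xs\<in>incr_tuples n p. of_int (w_odd (hd xs)) / (\<Prod>i\<leftarrow>xs. of_nat i))"
      unfolding sum.inter_filter[OF finite_incr_tuples] sum_subtractf[symmetric]
      by (intro sum.cong refl) (simp add: w_odd_def)
    with w_odd_weighted_sum_cong_0[OF \<open>prime p\<close> \<open>p > n + 1\<close> \<open>odd n\<close>] have "p_cong p ?A ?B"
      by (simp only: p_cong_iff_diff_0[of p ?A])
    then show "rat_cong ?A ?B (int p)" by (rule p_cong_imp_rat_cong[OF \<open>prime p\<close>])
  next
    assume "even n"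
    have "?C - ?D = (\<Sum>xs\<in>incr_tuples n p. of_int (w_even (hd xs)) / (\<Prod>i\<leftarrow>xs. of_nat i))"
      unfolding sum.inter_filter[OF finite_incr_tuples] sum_distrib_left sum_subtractf[symmetric]
      by (intro sum.cong refl) (simp add: w_even_def diff_divide_distrib)
    with w_even_weighted_sum_cong_0[OF \<open>prime p\<close> assms(1,3) \<open>even n\<close>] have "p_cong p ?C ?D"
      by (simp only: p_cong_iff_diff_0[of p ?C])
    then show "rat_cong ?C ?D (int p)" by (rule p_cong_imp_rat_cong[OF \<open>prime p\<close>])
  qed
qed

end
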